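(* Let $\Re_1,\Re_2$ be commutative Krasner hyperrings with identity, $\Re=\Re_1\times\Re_2$, $\varphi_i$ a hyperideal reduction and $\gamma_i$ a hyperideal expansion on $L(\Re_i)$ ($i=1,2$), and define $\phi(N_1\times N_2)=\varphi_1(N_1)\times\varphi_2(N_2)$ and $\delta(N_1\times N_2)=\gamma_1(N_1)\times\gamma_2(N_2)$. Then $N$ is a $\phi$-$\delta$-primary hyperideal of $\Re$ in each of the following cases: (i) $N=N_1\times N_2$ where each $N_i$ is a proper hyperideal of $\Re_i$ with $\varphi_i(N_i)=N_i$; (ii) $N=N_1\times\Re_2$ where $N_1$ is a $\gamma_1$-primary hyperideal of $\Re_1$; (iii) $N=\Re_1\times N_2$ where $N_2$ is a $\gamma_2$-primary hyperideal of $\Re_2$; (iv) $N=N_1\times\Re_2$ where $N_1$ is a $\varphi_1$-$\gamma_1$-primary hyperideal of $\Re_1$ and $\varphi_2(\Re_2)=\Re_2$; (v) $N=\Re_1\times N_2$ where $N_2$ is a $\varphi_2$-$\gamma_2$-primary hyperideal of $\Re_2$ and $\varphi_1(\Re_1)=\Re_1$.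
   Context: Krasner hyperring: $(\Re,\oplus)$ canonical hypergroup, $(\Re,\circ)$ commutative semigroup with identity $1\neq0$ and $0$ absorbing, $\circ$ distributive over $\oplus$. Hyperideals: nonempty $N$ with $a\oplus(-b)\subseteq N$, $r\circ a\in N$; $L(\Re)$ the set of hyperideals. $\Re_1\times\Re_2$ has componentwise operations; every hyperideal of it has the form $N_1\times N_2$ with $N_i$ a hyperideal of $\Re_i$ (a product with $\emptyset$ is $\emptyset$). A hyperideal reduction is $\phi:L(\Re)\to L(\Re)\cup\{\emptyset\}$ with $\phi(N)\subseteq N$ and $N\subseteq M\Rightarrow\phi(N)\subseteq\phi(M)$; an expansion is $\delta:L(\Re)\to L(\Re)$ with $N\subseteq\delta(N)$ and monotone. A proper hyperideal $N$ is $\phi$-$\delta$-primary if $a\circ b\in N$, $a\circ b\notin\phi(N)$ imply $a\in N$ or $b\in\delta(N)$; it is $\delta$-primary if $a\circ b\in N$ implies $a\in N$ or $b\in\delta(N)$. *)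

theory Defs
  imports Main
begin

record 'a hyperring =
  hcarrier :: "'a set"
  hadd :: "'a \<Rightarrow> 'a \<Rightarrow> 'a set"
  hmul :: "'a \<Rightarrow> 'a \<Rightarrow> 'a"
  hzero :: 'a
  hone :: 'a
  hneg :: "'a \<Rightarrow> 'a"

definition set_hadd :: "('a, 'm) hyperring_scheme \<Rightarrow> 'a set \<Rightarrow> 'a set \<Rightarrow> 'a set" where
  "set_hadd R A B = (\<Union>x\<in>A. \<Union>y\<in>B. hadd R x y)"

definition canonical_hypergroup :: "('a, 'm) hyperring_scheme \<Rightarrow> bool" where
  "canonical_hypergroup R \<longleftrightarrow>
     (\<forall>x\<in>hcarrier R. \<forall>y\<in>hcarrier R. hadd R x y \<noteq> {} \<and> hadd R x y \<subseteq> hcarrier R) \<and>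
     (\<forall>x\<in>hcarrier R. \<forall>y\<in>hcarrier R. \<forall>z\<in>hcarrier R.
        set_hadd R (hadd R x y) {z} = set_hadd R {x} (hadd R y z)) \<and>
     (\<forall>x\<in>hcarrier R. \<forall>y\<in>hcarrier R. hadd R x y = hadd R y x) \<and>
     hzero R \<in> hcarrier R \<and>
     (\<forall>x\<in>hcarrier R. hadd R (hzero R) x = {x}) \<and>
     (\<forall>x\<in>hcarrier R. hneg R x \<in> hcarrier R \<and> hzero R \<in> hadd R x (hneg R x) \<and>
        (\<forall>y\<in>hcarrier R. hzero R \<in> hadd R x y \<longrightarrow> y = hneg R x)) \<and>
     (\<forall>x\<in>hcarrier R. \<forall>y\<in>hcarrier R. \<forall>z\<in>hcarrier R.
        z \<in> hadd R x y \<longrightarrow> x \<in> hadd R z (hneg R y) \<and> y \<in> hadd R (hneg R x) z)"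

definition krasner_hyperring :: "('a, 'm) hyperring_scheme \<Rightarrow> bool" where
  "krasner_hyperring R \<longleftrightarrow>
     canonical_hypergroup R \<and>
     (\<forall>x\<in>hcarrier R. \<forall>y\<in>hcarrier R. hmul R x y \<in> hcarrier R) \<and>
     (\<forall>x\<in>hcarrier R. \<forall>y\<in>hcarrier R. \<forall>z\<in>hcarrier R.
        hmul R (hmul R x y) z = hmul R x (hmul R y z)) \<and>
     (\<forall>x\<in>hcarrier R. \<forall>y\<in>hcarrier R. hmul R x y = hmul R y x) \<and>
     hone R \<in> hcarrier R \<and> hone R \<noteq> hzero R \<and>
     (\<forall>x\<in>hcarrier R. hmul R (hone R) x = x) \<and>
     (\<forall>x\<in>hcarrier R. hmul R (hzero R) x = hzero R) \<and>
     (\<forall>x\<in>hcarrier R. \<forall>y\<in>hcarrier R. \<forall>z\<in>hcarrier R.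
        hmul R x ` hadd R y z = hadd R (hmul R x y) (hmul R x z))"

definition hyperideal :: "('a, 'm) hyperring_scheme \<Rightarrow> 'a set \<Rightarrow> bool" where
  "hyperideal R N \<longleftrightarrow> N \<noteq> {} \<and> N \<subseteq> hcarrier R \<and>
     (\<forall>a\<in>N. \<forall>b\<in>N. hadd R a (hneg R b) \<subseteq> N) \<and>
     (\<forall>r\<in>hcarrier R. \<forall>a\<in>N. hmul R r a \<in> N)"

definition hprod :: "'a hyperring \<Rightarrow> 'b hyperring \<Rightarrow> ('a \<times> 'b) hyperring" where
  "hprod R1 R2 = \<lparr> hcarrier = hcarrier R1 \<times> hcarrier R2,
     hadd = (\<lambda>x y. hadd R1 (fst x) (fst y) \<times> hadd R2 (snd x) (snd y)),
     hmul = (\<lambda>x y. (hmul R1 (fst x) (fst y), hmul R2 (snd x) (snd y))),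
     hzero = (hzero R1, hzero R2), hone = (hone R1, hone R2),
     hneg = (\<lambda>x. (hneg R1 (fst x), hneg R2 (snd x))) \<rparr>"

definition hyperideal_reduction :: "('a, 'm) hyperring_scheme \<Rightarrow> ('a set \<Rightarrow> 'a set) \<Rightarrow> bool" where
  "hyperideal_reduction R \<phi> \<longleftrightarrow>
     (\<forall>N. hyperideal R N \<longrightarrow> (\<phi> N = {} \<or> hyperideal R (\<phi> N)) \<and> \<phi> N \<subseteq> N) \<and>
     (\<forall>N M. hyperideal R N \<and> hyperideal R M \<and> N \<subseteq> M \<longrightarrow> \<phi> N \<subseteq> \<phi> M)"

definition hyperideal_expansion :: "('a, 'm) hyperring_scheme \<Rightarrow> ('a set \<Rightarrow> 'a set) \<Rightarrow> bool" where
  "hyperideal_expansion R \<delta> \<longleftrightarrow>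
     (\<forall>N. hyperideal R N \<longrightarrow> hyperideal R (\<delta> N) \<and> N \<subseteq> \<delta> N) \<and>
     (\<forall>N M. hyperideal R N \<and> hyperideal R M \<and> N \<subseteq> M \<longrightarrow> \<delta> N \<subseteq> \<delta> M)"

definition phi_delta_primary ::
  "('a, 'm) hyperring_scheme \<Rightarrow> ('a set \<Rightarrow> 'a set) \<Rightarrow> ('a set \<Rightarrow> 'a set) \<Rightarrow> 'a set \<Rightarrow> bool" where
  "phi_delta_primary R \<phi> \<delta> N \<longleftrightarrow> hyperideal R N \<and> N \<noteq> hcarrier R \<and>
     (\<forall>a\<in>hcarrier R. \<forall>b\<in>hcarrier R.
        hmul R a b \<in> N \<and> hmul R a b \<notin> \<phi> N \<longrightarrow> a \<in> N \<or> b \<in> \<delta> N)"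

definition delta_primary ::
  "('a, 'm) hyperring_scheme \<Rightarrow> ('a set \<Rightarrow> 'a set) \<Rightarrow> 'a set \<Rightarrow> bool" where
  "delta_primary R \<delta> N \<longleftrightarrow> hyperideal R N \<and> N \<noteq> hcarrier R \<and>
     (\<forall>a\<in>hcarrier R. \<forall>b\<in>hcarrier R.
        hmul R a b \<in> N \<longrightarrow> a \<in> N \<or> b \<in> \<delta> N)"

end

theory Submission
  imports Defs
begin

text \<open>Multiplication in \<open>R\<^sub>1 \<times> R\<^sub>2\<close> is componentwise, so a product \<open>ab\<close> lies in
  \<open>N\<^sub>1 \<times> R\<^sub>2\<close> (resp. outside \<open>\<phi>(N\<^sub>1) \<times> R\<^sub>2\<close>) exactly when its first component lies in
  \<open>N\<^sub>1\<close> (resp. outside \<open>\<phi>(N\<^sub>1)\<close>); a factor with full second component is therefore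
  \<open>\<phi>\<close>-\<open>\<delta>\<close>-primary as soon as its first component is, because \<open>R\<^sub>2 \<subseteq> \<gamma>\<^sub>2(R\<^sub>2)\<close>.
  A \<open>\<delta>\<close>-primary hyperideal is the special case of the reduction \<open>\<lambda>_. \<emptyset>\<close>, and a
  proper hyperideal fixed by \<open>\<phi>\<close> is \<open>\<phi>\<close>-\<open>\<delta>\<close>-primary for a vacuous reason.\<close>

definition times_map :: "('a set \<Rightarrow> 'a set) \<Rightarrow> ('b set \<Rightarrow> 'b set) \<Rightarrow> ('a \<times> 'b) set \<Rightarrow> ('a \<times> 'b) set"
  where "times_map f g N = f (fst ` N) \<times> g (snd ` N)"

lemma times_map_Times:
  "A \<noteq> {} \<Longrightarrow> B \<noteq> {} \<Longrightarrow> times_map f g (A \<times> B) = f A \<times> g B"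
  by (simp add: times_map_def)

lemma hcarrier_hprod [simp]: "hcarrier (hprod R1 R2) = hcarrier R1 \<times> hcarrier R2"
  by (simp add: hprod_def)

lemma hmul_hprod [simp]:
  "hmul (hprod R1 R2) x y = (hmul R1 (fst x) (fst y), hmul R2 (snd x) (snd y))"
  by (simp add: hprod_def)

lemma hadd_hprod [simp]:
  "hadd (hprod R1 R2) x y = hadd R1 (fst x) (fst y) \<times> hadd R2 (snd x) (snd y)"
  by (simp add: hprod_def)

lemma hneg_hprod [simp]: "hneg (hprod R1 R2) x = (hneg R1 (fst x), hneg R2 (snd x))"
  by (simp add: hprod_def)

lemma hyperideal_hcarrier:
  assumes "krasner_hyperring R"
  shows "hyperideal R (hcarrier R)"
proof -
  have "hzero R \<in> hcarrier R" "\<forall>x\<in>hcarrier R. hneg R x \<in> hcarrier R"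
    "\<forall>x\<in>hcarrier R. \<forall>y\<in>hcarrier R. hadd R x y \<subseteq> hcarrier R"
    "\<forall>x\<in>hcarrier R. \<forall>y\<in>hcarrier R. hmul R x y \<in> hcarrier R"
    using assms by (simp_all add: krasner_hyperring_def canonical_hypergroup_def)
  then show ?thesis
    unfolding hyperideal_def by blast
qed

lemma hyperideal_Times:
  assumes "hyperideal R1 N1" and "hyperideal R2 N2"
  shows "hyperideal (hprod R1 R2) (N1 \<times> N2)"
  unfolding hyperideal_def
proof (intro conjI ballI)
  show "N1 \<times> N2 \<noteq> {}" "N1 \<times> N2 \<subseteq> hcarrier (hprod R1 R2)"
    using assms by (auto simp: hyperideal_def)
next
  fix a b
  assume "a \<in> N1 \<times> N2" "b \<in> N1 \<times> N2"
  with assms show "hadd (hprod R1 R2) a (hneg (hprod R1 R2) b) \<subseteq> N1 \<times> N2"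
    unfolding hyperideal_def by (simp add: mem_Times_iff Sigma_mono)
next
  fix r a
  assume "r \<in> hcarrier (hprod R1 R2)" "a \<in> N1 \<times> N2"
  with assms show "hmul (hprod R1 R2) r a \<in> N1 \<times> N2"
    unfolding hyperideal_def by (simp add: mem_Times_iff)
qed

lemma delta_primary_iff_phi_delta_primary_empty:
  "delta_primary R \<delta> N \<longleftrightarrow> phi_delta_primary R (\<lambda>_. {}) \<delta> N"
  by (simp add: delta_primary_def phi_delta_primary_def)

lemma phi_delta_primary_if_phi_fixed:
  assumes "hyperideal R N" and "N \<noteq> hcarrier R" and "\<phi> N = N"
  shows "phi_delta_primary R \<phi> \<delta> N"
  using assms by (simp add: phi_delta_primary_def)

lemma phi_delta_primary_Times_hcarrier:
  assumes N1: "phi_delta_primary R1 \<psi> \<gamma>1 N1"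
    and R2: "krasner_hyperring R2" and \<gamma>2: "hyperideal_expansion R2 \<gamma>2"
    and \<phi>: "\<psi> N1 \<times> hcarrier R2 \<subseteq> \<phi> (N1 \<times> hcarrier R2)"
  shows "phi_delta_primary (hprod R1 R2) \<phi> (times_map \<gamma>1 \<gamma>2) (N1 \<times> hcarrier R2)"
proof -
  have ideal2: "hyperideal R2 (hcarrier R2)"
    using R2 by (rule hyperideal_hcarrier)
  then have ne2: "hcarrier R2 \<noteq> {}" and full2: "hcarrier R2 \<subseteq> \<gamma>2 (hcarrier R2)"
    using \<gamma>2 by (auto simp: hyperideal_def hyperideal_expansion_def)
  have ideal1: "hyperideal R1 N1" and proper1: "N1 \<noteq> hcarrier R1"
    using N1 by (auto simp: phi_delta_primary_def)
  then have "N1 \<noteq> {}"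
    by (simp add: hyperideal_def)
  then have \<delta>: "times_map \<gamma>1 \<gamma>2 (N1 \<times> hcarrier R2) = \<gamma>1 N1 \<times> \<gamma>2 (hcarrier R2)"
    using ne2 by (rule times_map_Times)
  show ?thesis
    unfolding phi_delta_primary_def \<delta>
  proof (intro conjI ballI impI)
    show "hyperideal (hprod R1 R2) (N1 \<times> hcarrier R2)"
      using ideal1 ideal2 by (rule hyperideal_Times)
    show "N1 \<times> hcarrier R2 \<noteq> hcarrier (hprod R1 R2)"
      using proper1 ne2 \<open>N1 \<noteq> {}\<close> by (simp add: times_eq_iff)
  next
    fix a b
    assume a: "a \<in> hcarrier (hprod R1 R2)" and b: "b \<in> hcarrier (hprod R1 R2)"
      and "hmul (hprod R1 R2) a b \<in> N1 \<times> hcarrier R2 \<and>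
        hmul (hprod R1 R2) a b \<notin> \<phi> (N1 \<times> hcarrier R2)"
    then have "hmul R1 (fst a) (fst b) \<in> N1" "hmul R1 (fst a) (fst b) \<notin> \<psi> N1"
      using \<phi> by (auto simp: mem_Times_iff)
    then have "fst a \<in> N1 \<or> fst b \<in> \<gamma>1 N1"
      using N1 a b by (auto simp: phi_delta_primary_def mem_Times_iff)
    then show "a \<in> N1 \<times> hcarrier R2 \<or> b \<in> \<gamma>1 N1 \<times> \<gamma>2 (hcarrier R2)"
      using a b full2 by (auto simp: mem_Times_iff)
  qed
qed

lemma phi_delta_primary_hcarrier_Times:
  assumes N2: "phi_delta_primary R2 \<psi> \<gamma>2 N2"
    and R1: "krasner_hyperring R1" and \<gamma>1: "hyperideal_expansion R1 \<gamma>1"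
    and \<phi>: "hcarrier R1 \<times> \<psi> N2 \<subseteq> \<phi> (hcarrier R1 \<times> N2)"
  shows "phi_delta_primary (hprod R1 R2) \<phi> (times_map \<gamma>1 \<gamma>2) (hcarrier R1 \<times> N2)"
proof -
  have ideal1: "hyperideal R1 (hcarrier R1)"
    using R1 by (rule hyperideal_hcarrier)
  then have ne1: "hcarrier R1 \<noteq> {}" and full1: "hcarrier R1 \<subseteq> \<gamma>1 (hcarrier R1)"
    using \<gamma>1 by (auto simp: hyperideal_def hyperideal_expansion_def)
  have ideal2: "hyperideal R2 N2" and proper2: "N2 \<noteq> hcarrier R2"
    using N2 by (auto simp: phi_delta_primary_def)
  then have "N2 \<noteq> {}"
    by (simp add: hyperideal_def)
  with ne1 have \<delta>: "times_map \<gamma>1 \<gamma>2 (hcarrier R1 \<times> N2) = \<gamma>1 (hcarrier R1) \<times> \<gamma>2 N2"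
    by (rule times_map_Times)
  show ?thesis
    unfolding phi_delta_primary_def \<delta>
  proof (intro conjI ballI impI)
    show "hyperideal (hprod R1 R2) (hcarrier R1 \<times> N2)"
      using ideal1 ideal2 by (rule hyperideal_Times)
    show "hcarrier R1 \<times> N2 \<noteq> hcarrier (hprod R1 R2)"
      using proper2 ne1 \<open>N2 \<noteq> {}\<close> by (simp add: times_eq_iff)
  next
    fix a b
    assume a: "a \<in> hcarrier (hprod R1 R2)" and b: "b \<in> hcarrier (hprod R1 R2)"
      and "hmul (hprod R1 R2) a b \<in> hcarrier R1 \<times> N2 \<and>
        hmul (hprod R1 R2) a b \<notin> \<phi> (hcarrier R1 \<times> N2)"
    then have "hmul R2 (snd a) (snd b) \<in> N2" "hmul R2 (snd a) (snd b) \<notin> \<psi> N2"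
      using \<phi> by (auto simp: mem_Times_iff)
    then have "snd a \<in> N2 \<or> snd b \<in> \<gamma>2 N2"
      using N2 a b by (auto simp: phi_delta_primary_def mem_Times_iff)
    then show "a \<in> hcarrier R1 \<times> N2 \<or> b \<in> \<gamma>1 (hcarrier R1) \<times> \<gamma>2 N2"
      using a b full1 by (auto simp: mem_Times_iff)
  qed
qed

theorem mainTheorem5:
  fixes R1 :: "'a hyperring" and R2 :: "'b hyperring"
    and \<phi>1 \<gamma>1 :: "'a set \<Rightarrow> 'a set" and \<phi>2 \<gamma>2 :: "'b set \<Rightarrow> 'b set"
    and \<phi> \<delta> :: "('a \<times> 'b) set \<Rightarrow> ('a \<times> 'b) set"
  assumes "krasner_hyperring R1" and "krasner_hyperring R2"
    and "hyperideal_reduction R1 \<phi>1" and "hyperideal_reduction R2 \<phi>2"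
    and "hyperideal_expansion R1 \<gamma>1" and "hyperideal_expansion R2 \<gamma>2"
    and "\<phi> = (\<lambda>N. \<phi>1 (fst ` N) \<times> \<phi>2 (snd ` N))"
    and "\<delta> = (\<lambda>N. \<gamma>1 (fst ` N) \<times> \<gamma>2 (snd ` N))"
  shows
    "(\<forall>N1 N2. hyperideal R1 N1 \<and> N1 \<noteq> hcarrier R1 \<and> \<phi>1 N1 = N1 \<and>
              hyperideal R2 N2 \<and> N2 \<noteq> hcarrier R2 \<and> \<phi>2 N2 = N2 \<longrightarrow>
              phi_delta_primary (hprod R1 R2) \<phi> \<delta> (N1 \<times> N2)) \<and>
     (\<forall>N1. delta_primary R1 \<gamma>1 N1 \<longrightarrow>
              phi_delta_primary (hprod R1 R2) \<phi> \<delta> (N1 \<times> hcarrier R2)) \<and>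
     (\<forall>N2. delta_primary R2 \<gamma>2 N2 \<longrightarrow>
              phi_delta_primary (hprod R1 R2) \<phi> \<delta> (hcarrier R1 \<times> N2)) \<and>
     (\<forall>N1. phi_delta_primary R1 \<phi>1 \<gamma>1 N1 \<and> \<phi>2 (hcarrier R2) = hcarrier R2 \<longrightarrow>
              phi_delta_primary (hprod R1 R2) \<phi> \<delta> (N1 \<times> hcarrier R2)) \<and>
     (\<forall>N2. phi_delta_primary R2 \<phi>2 \<gamma>2 N2 \<and> \<phi>1 (hcarrier R1) = hcarrier R1 \<longrightarrow>
              phi_delta_primary (hprod R1 R2) \<phi> \<delta> (hcarrier R1 \<times> N2))"
proof -
  have \<phi>_eq: "\<phi> = times_map \<phi>1 \<phi>2" and \<delta>_eq: "\<delta> = times_map \<gamma>1 \<gamma>2"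
    using assms(7,8) by (simp_all add: times_map_def fun_eq_iff)
  have nonempty: "hcarrier R1 \<noteq> {}" "hcarrier R2 \<noteq> {}"
    using assms(1,2) hyperideal_hcarrier by (auto simp: hyperideal_def)
  show ?thesis
    unfolding \<delta>_eq
  proof (intro conjI allI impI)
    fix N1 N2
    assume "hyperideal R1 N1 \<and> N1 \<noteq> hcarrier R1 \<and> \<phi>1 N1 = N1 \<and>
      hyperideal R2 N2 \<and> N2 \<noteq> hcarrier R2 \<and> \<phi>2 N2 = N2"
    moreover from this have "N1 \<noteq> {}" "N2 \<noteq> {}"
      by (simp_all add: hyperideal_def)
    ultimately show "phi_delta_primary (hprod R1 R2) \<phi> (times_map \<gamma>1 \<gamma>2) (N1 \<times> N2)"
      by (intro phi_delta_primary_if_phi_fixed)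
        (simp_all add: \<phi>_eq hyperideal_Times times_map_Times times_eq_iff)
  next
    fix N1
    assume "delta_primary R1 \<gamma>1 N1"
    then show "phi_delta_primary (hprod R1 R2) \<phi> (times_map \<gamma>1 \<gamma>2) (N1 \<times> hcarrier R2)"
      using assms(2,6) by (intro phi_delta_primary_Times_hcarrier[where \<psi> = "\<lambda>_. {}"])
        (simp_all add: delta_primary_iff_phi_delta_primary_empty)
  next
    fix N2
    assume "delta_primary R2 \<gamma>2 N2"
    then show "phi_delta_primary (hprod R1 R2) \<phi> (times_map \<gamma>1 \<gamma>2) (hcarrier R1 \<times> N2)"
      using assms(1,5) by (intro phi_delta_primary_hcarrier_Times[where \<psi> = "\<lambda>_. {}"])
        (simp_all add: delta_primary_iff_phi_delta_primary_empty)
  next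
    fix N1
    assume "phi_delta_primary R1 \<phi>1 \<gamma>1 N1 \<and> \<phi>2 (hcarrier R2) = hcarrier R2"
    then show "phi_delta_primary (hprod R1 R2) \<phi> (times_map \<gamma>1 \<gamma>2) (N1 \<times> hcarrier R2)"
      using assms(2,6) nonempty by (intro phi_delta_primary_Times_hcarrier[where \<psi> = \<phi>1])
        (auto simp: \<phi>_eq times_map_Times phi_delta_primary_def hyperideal_def)
  next
    fix N2
    assume "phi_delta_primary R2 \<phi>2 \<gamma>2 N2 \<and> \<phi>1 (hcarrier R1) = hcarrier R1"
    then show "phi_delta_primary (hprod R1 R2) \<phi> (times_map \<gamma>1 \<gamma>2) (hcarrier R1 \<times> N2)"
      using assms(1,5) nonempty by (intro phi_delta_primary_hcarrier_Times[where \<psi> = \<phi>2])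
        (auto simp: \<phi>_eq times_map_Times phi_delta_primary_def hyperideal_def)
  qed
qed

end
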